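(* Let $\mathcal{I}$ be an ideal on $\omega$ such that $\mathrm{fin}\subseteq\mathcal{I}$. Then there exist $A, C \in [\omega]^\omega$ such that $A = \omega\setminus C$ and $\mathcal{I}|A$ is isomorphic to $\mathcal{I}$.
   Context: $\mathrm{fin}$ is the ideal of finite subsets of $\omega$. For $A\subseteq\omega$, $\mathcal{I}|A = \{I \subseteq A : I\in\mathcal{I}\}$, an ideal on $A$. Ideals $\mathcal{I}$ on $\Omega$ and $\mathcal{J}$ on $\Omega'$ are isomorphic if there is a bijection $f:\Omega\to\Omega'$ such that for every $B\subseteq\Omega'$, $B\in\mathcal{J}$ iff $f^{-1}(B)\in\mathcal{I}$. *)

theory Defs
  imports Main
begin

definition is_ideal :: "'a set set \<Rightarrow> 'a set \<Rightarrow> bool" where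
  "is_ideal \<I> \<Omega> \<longleftrightarrow>
     \<I> \<subseteq> Pow \<Omega> \<and> {} \<in> \<I> \<and>
     (\<forall>X Y. X \<in> \<I> \<longrightarrow> Y \<subseteq> X \<longrightarrow> Y \<in> \<I>) \<and>
     (\<forall>X Y. X \<in> \<I> \<longrightarrow> Y \<in> \<I> \<longrightarrow> X \<union> Y \<in> \<I>) \<and>
     \<Omega> \<notin> \<I>"

definition fin :: "nat set set" where
  "fin = {X. finite X}"

definition ideal_restr :: "'a set set \<Rightarrow> 'a set \<Rightarrow> 'a set set" where
  "ideal_restr \<I> A = {I. I \<subseteq> A \<and> I \<in> \<I>}"

definition ideals_isomorphic :: "'a set set \<Rightarrow> 'a set \<Rightarrow> 'b set set \<Rightarrow> 'b set \<Rightarrow> bool" where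
  "ideals_isomorphic \<I> \<Omega> \<J> \<Omega>' \<longleftrightarrow>
     (\<exists>f. bij_betw f \<Omega> \<Omega>' \<and> (\<forall>B. B \<subseteq> \<Omega>' \<longrightarrow> (B \<in> \<J> \<longleftrightarrow> f -` B \<inter> \<Omega> \<in> \<I>)))"

end

theory Submission
  imports Defs "HOL-Library.Countable_Set"
begin

text \<open>If \<I> contains an infinite set \<open>C\<^sub>0\<close>, split \<open>C\<^sub>0\<close> into two infinite halves \<open>E\<close> and \<open>F\<close>
  and put \<open>A = \<omega> - F\<close>. A bijection of \<open>E\<close> onto \<open>C\<^sub>0\<close>, extended by the identity outside \<open>C\<^sub>0\<close>,
  maps \<open>A\<close> onto \<open>\<omega>\<close>; it only moves points inside \<open>C\<^sub>0 \<in> \<I>\<close>, so membership in \<I> is preserved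
  under taking preimages. Otherwise \<open>\<I> = fin\<close>, and any bijection of an infinite
  co-infinite \<open>A\<close> onto \<open>\<omega>\<close> works.\<close>

lemma infinite_nat_set_split:
  fixes S :: "nat set"
  assumes "infinite S"
  obtains E F where "S = E \<union> F" "E \<inter> F = {}" "infinite E" "infinite F"
proof -
  obtain h :: "nat \<Rightarrow> nat" where h: "bij_betw h UNIV S"
    using countable_infiniteE'[OF countableI_type assms] .
  then have "inj h" by (simp add: bij_betw_def)
  define E where "E = range (\<lambda>k. h (2 * k))"
  define F where "F = range (\<lambda>k. h (2 * k + 1))"
  have "S = range h" using h by (simp add: bij_betw_def)
  also have "\<dots> = E \<union> F"
  proof (intro equalityI subsetI)
    fix y assume "y \<in> range h"
    then obtain n where "y = h n" by blast
    then show "y \<in> E \<union> F"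
    proof (cases "even n")
      case True
      then have "y = h (2 * (n div 2))" using \<open>y = h n\<close> by simp
      then show ?thesis by (simp add: E_def)
    next
      case False
      then have "y = h (2 * (n div 2) + 1)" using \<open>y = h n\<close> by simp
      then show ?thesis by (simp add: F_def)
    qed
  qed (auto simp: E_def F_def)
  finally have "S = E \<union> F" .
  moreover have "E \<inter> F = {}"
  proof -
    have "h (2 * a) \<noteq> h (2 * b + 1)" for a b
    proof
      assume "h (2 * a) = h (2 * b + 1)"
      then have "2 * a = 2 * b + 1" by (rule injD[OF \<open>inj h\<close>])
      then show False by presburger
    qed
    then show ?thesis unfolding E_def F_def by auto
  qed
  moreover have "infinite E" "infinite F"
  proof -
    have "inj (\<lambda>k. h (2 * k))" "inj (\<lambda>k. h (2 * k + 1))"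
      by (auto intro!: inj_onI dest!: injD[OF \<open>inj h\<close>])
    then show "infinite E" "infinite F"
      unfolding E_def F_def by (simp_all add: range_inj_infinite)
  qed
  ultimately show thesis by (rule that)
qed

lemma ex_bij_betw_infinite_nat_sets:
  fixes S T :: "nat set"
  assumes "infinite S" "infinite T"
  obtains g where "bij_betw g S T"
proof -
  obtain e :: "nat \<Rightarrow> nat" where "bij_betw e S UNIV"
    using countableE_infinite[OF countableI_type assms(1)] .
  moreover obtain g :: "nat \<Rightarrow> nat" where "bij_betw g UNIV T"
    using countable_infiniteE'[OF countableI_type assms(2)] .
  ultimately have "bij_betw (g \<circ> e) S T" by (rule bij_betw_trans)
  then show thesis by (rule that)
qed

lemma ideal_mem_iff_eq_outside_member:
  assumes "is_ideal \<I> \<Omega>" "C \<in> \<I>" "X - C = Y - C"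
  shows "X \<in> \<I> \<longleftrightarrow> Y \<in> \<I>"
proof -
  have down: "\<And>X Y. X \<in> \<I> \<Longrightarrow> Y \<subseteq> X \<Longrightarrow> Y \<in> \<I>"
    and Un: "\<And>X Y. X \<in> \<I> \<Longrightarrow> Y \<in> \<I> \<Longrightarrow> X \<union> Y \<in> \<I>"
    using assms(1) unfolding is_ideal_def by blast+
  have "X \<in> \<I> \<longleftrightarrow> X - C \<in> \<I>" for X
  proof
    assume "X - C \<in> \<I>"
    then have "(X - C) \<union> C \<in> \<I>" using Un assms(2) by blast
    then show "X \<in> \<I>" using down by blast
  qed (use down in blast)
  then show ?thesis using assms(3) by metis
qed

lemma ideals_isomorphic_restrI:
  assumes "bij_betw f A \<Omega>'" "\<And>B. B \<subseteq> \<Omega>' \<Longrightarrow> B \<in> \<J> \<longleftrightarrow> f -` B \<inter> A \<in> \<I>"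
  shows "ideals_isomorphic (ideal_restr \<I> A) A \<J> \<Omega>'"
  unfolding ideals_isomorphic_def ideal_restr_def using assms by blast

lemma finite_vimage_Int_iff_bij_betw:
  assumes "bij_betw f A \<Omega>'" "B \<subseteq> \<Omega>'"
  shows "finite (f -` B \<inter> A) \<longleftrightarrow> finite B"
proof -
  have "bij_betw f (f -` B \<inter> A) B"
    by (rule bij_betw_subset[OF assms(1)]) (use assms in \<open>auto simp: bij_betw_def\<close>)
  then show ?thesis by (rule bij_betw_finite)
qed

lemma ideals_isomorphic_restr_fin:
  fixes A :: "nat set"
  assumes "infinite A"
  shows "ideals_isomorphic (ideal_restr fin A) A fin UNIV"
proof -
  obtain f :: "nat \<Rightarrow> nat" where f: "bij_betw f A UNIV"
    using ex_bij_betw_infinite_nat_sets[OF assms infinite_UNIV_nat] .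
  then show ?thesis
    by (rule ideals_isomorphic_restrI) (simp add: fin_def finite_vimage_Int_iff_bij_betw[OF f])
qed

lemma ideals_isomorphic_restr_shrink_member:
  assumes "is_ideal \<I> \<Omega>" "C \<in> \<I>" "E \<subseteq> C" "bij_betw g E C"
  shows "ideals_isomorphic (ideal_restr \<I> (\<Omega> - (C - E))) (\<Omega> - (C - E)) \<I> \<Omega>"
proof -
  define A where "A = \<Omega> - (C - E)"
  define f where "f x = (if x \<in> C then g x else x)" for x
  have "C \<subseteq> \<Omega>" using assms(1,2) by (auto simp: is_ideal_def)
  have "bij_betw f (E \<union> (\<Omega> - C)) (C \<union> (\<Omega> - C))"
  proof (rule bij_betw_combine)
    have "bij_betw f E C \<longleftrightarrow> bij_betw g E C"
      using assms(3) by (intro bij_betw_cong) (auto simp: f_def)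
    then show "bij_betw f E C" using assms(4) by blast
    show "bij_betw f (\<Omega> - C) (\<Omega> - C)"
      by (simp add: f_def bij_betw_def inj_on_def)
  qed auto
  moreover have "E \<union> (\<Omega> - C) = A" "C \<union> (\<Omega> - C) = \<Omega>"
    using assms(3) \<open>C \<subseteq> \<Omega>\<close> by (auto simp: A_def)
  ultimately have "bij_betw f A \<Omega>" by simp
  then show ?thesis
    unfolding A_def[symmetric]
  proof (rule ideals_isomorphic_restrI)
    fix B assume "B \<subseteq> \<Omega>"
    then have "(f -` B \<inter> A) - C = B - C"
      by (auto simp: f_def A_def)
    then show "B \<in> \<I> \<longleftrightarrow> f -` B \<inter> A \<in> \<I>"
      using ideal_mem_iff_eq_outside_member[OF assms(1,2)] by metis
  qed
qed

theorem lemma6p1: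
  fixes \<I> :: "nat set set"
  assumes "is_ideal \<I> (UNIV :: nat set)"
    and "fin \<subseteq> \<I>"
  shows "\<exists>A C. infinite A \<and> infinite C \<and> A = UNIV - C \<and>
           ideals_isomorphic (ideal_restr \<I> A) A \<I> (UNIV :: nat set)"
proof (cases "\<I> = fin")
  case True
  obtain E F :: "nat set" where split: "UNIV = E \<union> F" "E \<inter> F = {}" "infinite E" "infinite F"
    using infinite_nat_set_split[OF infinite_UNIV_nat] .
  have "ideals_isomorphic (ideal_restr \<I> E) E \<I> UNIV"
    unfolding True using \<open>infinite E\<close> by (rule ideals_isomorphic_restr_fin)
  moreover have "E = UNIV - F" using split(1,2) by blast
  ultimately show ?thesis using split(3,4) by blast
next
  case False
  with assms(2) obtain C\<^sub>0 where "C\<^sub>0 \<in> \<I>" "infinite C\<^sub>0"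
    unfolding fin_def by blast
  obtain E F where split: "C\<^sub>0 = E \<union> F" "E \<inter> F = {}" "infinite E" "infinite F"
    using infinite_nat_set_split[OF \<open>infinite C\<^sub>0\<close>] .
  obtain g :: "nat \<Rightarrow> nat" where "bij_betw g E C\<^sub>0"
    using ex_bij_betw_infinite_nat_sets[OF \<open>infinite E\<close> \<open>infinite C\<^sub>0\<close>] .
  then have "ideals_isomorphic (ideal_restr \<I> (UNIV - (C\<^sub>0 - E))) (UNIV - (C\<^sub>0 - E)) \<I> UNIV"
    using split(1) by (intro ideals_isomorphic_restr_shrink_member[OF assms(1) \<open>C\<^sub>0 \<in> \<I>\<close>]) auto
  moreover have "C\<^sub>0 - E = F" using split(1,2) by blast
  moreover have "infinite (UNIV - F)"
    using \<open>infinite E\<close> by (rule infinite_super[rotated]) (use split(2) in blast)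
  ultimately show ?thesis using \<open>infinite F\<close> by auto
qed

end
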